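(* Let $p\ge 1$ and let $Y:\overline{\mathcal{K}}_o^n\to\overline{\mathcal{K}}_o^n$ be an $L_p$-Minkowski valuation. Suppose that for every $n$-dimensional $K\in\overline{\mathcal{K}}_o^n$, every $\phi\in SL(n)$ and every $\lambda>0$ one has $Y(\phi K)=\phi\,YK$ (respectively $Y(\phi K)=\phi^{-t}YK$) and $Y(\lambda K)=\lambda^qYK$. Then these identities hold for every $K\in\overline{\mathcal{K}}_o^n$, i.e. $Y$ is $SL(n)$ covariant (respectively contravariant) and homogeneous of degree $q$ on all of $\overline{\mathcal{K}}_o^n$.
   Context: A convex body is a nonempty compact convex subset of $\mathbb{R}^n$. $\overline{\mathcal{K}}_o^n$ denotes the set of all convex bodies in $\mathbb{R}^n$ containing the origin (of any dimension). $h_K(x)=\max\{x\cdot y:y\in K\}$ is the support function; $\phi^{-t}$ is the inverse of the transpose of $\phi$. A map $Y:\overline{\mathcal{K}}_o^n\to\overline{\mathcal{K}}_o^n$ is an $L_p$-Minkowski valuation if $h_{Y(K\cup L)}^p+h_{Y(K\cap L)}^p=h_{YK}^p+h_{YL}^p$ whenever $K,L,K\cup L\in\overline{\mathcal{K}}_o^n$. *)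

theory Defs
  imports "HOL-Analysis.Analysis"
begin

definition convex_body :: "(real^'n) set \<Rightarrow> bool" where
  "convex_body K \<longleftrightarrow> K \<noteq> {} \<and> compact K \<and> convex K"

definition Ko :: "(real^'n) set set" where
  "Ko = {K. convex_body K \<and> 0 \<in> K}"

definition support_fun :: "(real^'n) set \<Rightarrow> real^'n \<Rightarrow> real" where
  "support_fun K x = Sup ((\<lambda>y. x \<bullet> y) ` K)"

definition Lp_Minkowski_valuation :: "real \<Rightarrow> ((real^'n) set \<Rightarrow> (real^'n) set) \<Rightarrow> bool" where
  "Lp_Minkowski_valuation p Y \<longleftrightarrow>
     (\<forall>K\<in>Ko. Y K \<in> Ko) \<and>
     (\<forall>K L. K \<in> Ko \<longrightarrow> L \<in> Ko \<longrightarrow> K \<union> L \<in> Ko \<longrightarrow>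
        (\<forall>x. support_fun (Y (K \<union> L)) x powr p + support_fun (Y (K \<inter> L)) x powr p
             = support_fun (Y K) x powr p + support_fun (Y L) x powr p))"

definition SL :: "(real^'n^'n) set" where
  "SL = {A. det A = 1}"

definition lin_image :: "real^'n^'n \<Rightarrow> (real^'n) set \<Rightarrow> (real^'n) set" where
  "lin_image A K = (\<lambda>x. A *v x) ` K"

definition inv_transpose :: "real^'n^'n \<Rightarrow> real^'n^'n" where
  "inv_transpose A = matrix_inv (transpose A)"

end

theory Submission
  imports Defs
begin

text \<open>Downward induction on the dimension of K.  If K has dimension less than n, pick a
direction u outside the span of K and let L1, L2 be the prisms K + [-1,0]u and K + [0,1]u.
Then L1, L2 and L1 \<union> L2 = K + [-1,1]u are convex bodies containing the origin, of larger
dimension than K, and L1 \<inter> L2 = K.  Both sides of the identity Y (f K) = g (Y K), for f, g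
linear and f injective, satisfy the L_p valuation property (the right-hand side because
h_{gM}(x) = h_M(g^* x)), so the identity for L1, L2, L1 \<union> L2 forces it for K: the p-th powers
of the support functions agree, hence the support functions, hence the bodies.\<close>

lemma bdd_above_inner_image: "bounded M \<Longrightarrow> bdd_above ((\<lambda>y. x \<bullet> y) ` M)"
  by (intro bounded_imp_bdd_above bounded_linear_image bounded_linear_inner_right)

lemma support_fun_ge:
  "bounded M \<Longrightarrow> y \<in> M \<Longrightarrow> x \<bullet> y \<le> support_fun M x"
  unfolding support_fun_def by (intro cSup_upper imageI bdd_above_inner_image)

lemma support_fun_nonneg: "M \<in> Ko \<Longrightarrow> 0 \<le> support_fun M x"
  using support_fun_ge[of M 0 x] by (simp add: Ko_def convex_body_def compact_imp_bounded)

lemma support_fun_linear_image: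
  fixes g :: "real^'n \<Rightarrow> real^'n"
  assumes "linear g"
  shows "support_fun (g ` M) x = support_fun M (adjoint g x)"
proof -
  have "(\<lambda>y. x \<bullet> y) ` g ` M = (\<lambda>y. adjoint g x \<bullet> y) ` M"
    unfolding image_image using adjoint_works[OF assms] by (simp add: inner_commute)
  then show ?thesis unfolding support_fun_def by simp
qed

lemma subset_if_support_fun_le:
  assumes "bounded M" "closed N" "convex N" "N \<noteq> {}"
    and le: "\<And>x. support_fun M x \<le> support_fun N x"
  shows "M \<subseteq> N"
proof
  fix z assume "z \<in> M"
  show "z \<in> N"
  proof (rule ccontr)
    assume "z \<notin> N"
    then obtain a b where ab: "a \<bullet> z < b" "\<forall>x\<in>N. b < a \<bullet> x"
      using separating_hyperplane_closed_point[OF assms(3,2)] by blast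
    have "support_fun N (-a) \<le> -b"
      unfolding support_fun_def using \<open>N \<noteq> {}\<close> ab(2)
      by (intro cSup_least) (auto simp: less_imp_le)
    moreover have "(-a) \<bullet> z \<le> support_fun M (-a)"
      using support_fun_ge[OF assms(1) \<open>z \<in> M\<close>] .
    ultimately show False using le[of "-a"] ab(1) by simp
  qed
qed

lemma Ko_eq_if_support_fun_eq:
  assumes "M \<in> Ko" "N \<in> Ko" "\<And>x. support_fun M x = support_fun N x"
  shows "M = N"
  using assms subset_if_support_fun_le[of M N] subset_if_support_fun_le[of N M]
  by (auto simp: Ko_def convex_body_def compact_imp_bounded compact_imp_closed)

lemma Ko_linear_image:
  fixes f :: "real^'n \<Rightarrow> real^'m"
  assumes "linear f" "K \<in> Ko"
  shows "f ` K \<in> Ko"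
  using assms linear_0[OF assms(1)]
  by (force simp: Ko_def convex_body_def linear_conv_bounded_linear
      intro: compact_continuous_image linear_continuous_on convex_linear_image)

lemma Ko_Int: "K \<in> Ko \<Longrightarrow> L \<in> Ko \<Longrightarrow> K \<inter> L \<in> Ko"
  by (auto simp: Ko_def convex_body_def compact_Int convex_Int)

lemma powr_eq_cancel:
  fixes a b p :: real
  assumes "0 \<le> a" "0 \<le> b" "0 < p" "a powr p = b powr p"
  shows "a = b"
  using assms by (metis less_irrefl linorder_neq_iff powr_less_mono2)

definition prism :: "(real^'n) set \<Rightarrow> real^'n \<Rightarrow> real \<Rightarrow> real \<Rightarrow> (real^'n) set" where
  "prism K u a b = {x + s *\<^sub>R u | x s. x \<in> K \<and> s \<in> {a..b}}"

lemma prism_eq_image: "prism K u a b = (\<lambda>z. fst z + snd z *\<^sub>R u) ` (K \<times> {a..b})"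
  unfolding prism_def by force

lemma prism_memI: "x \<in> K \<Longrightarrow> s \<in> {a..b} \<Longrightarrow> x + s *\<^sub>R u \<in> prism K u a b"
  unfolding prism_def by blast

lemma subset_prism: "a \<le> 0 \<Longrightarrow> 0 \<le> b \<Longrightarrow> K \<subseteq> prism K u a b"
  using prism_memI[of _ K 0 a b u] by auto

lemma prism_in_Ko:
  fixes u :: "real^'n"
  assumes "K \<in> Ko" "a \<le> 0" "0 \<le> b"
  shows "prism K u a b \<in> Ko"
proof -
  have lin: "linear (\<lambda>z::(real^'n) \<times> real. fst z + snd z *\<^sub>R u)"
    by (auto simp: linear_iff algebra_simps)
  have "compact (prism K u a b)" "convex (prism K u a b)"
    using assms(1) unfolding prism_eq_image Ko_def convex_body_def
    by (auto intro!: compact_continuous_image linear_continuous_on compact_Times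
        convex_linear_image convex_Times lin simp: linear_conv_bounded_linear[symmetric])
  moreover have "0 \<in> prism K u a b"
    using assms subset_prism[of a b K u] by (auto simp: Ko_def)
  ultimately show ?thesis unfolding Ko_def convex_body_def by auto
qed

lemma prism_Un:
  assumes "a \<le> b" "b \<le> c"
  shows "prism K u a b \<union> prism K u b c = prism K u a c"
proof
  show "prism K u a b \<union> prism K u b c \<subseteq> prism K u a c"
    using assms unfolding prism_def by force
  show "prism K u a c \<subseteq> prism K u a b \<union> prism K u b c"
  proof
    fix z assume "z \<in> prism K u a c"
    then obtain x s where "z = x + s *\<^sub>R u" "x \<in> K" "a \<le> s" "s \<le> c"
      unfolding prism_def by auto
    then show "z \<in> prism K u a b \<union> prism K u b c"
      by (cases "s \<le> b") (auto intro: prism_memI)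
  qed
qed

lemma prism_Int:
  assumes "u \<notin> span K" "a \<le> 0" "0 \<le> b"
  shows "prism K u a 0 \<inter> prism K u 0 b = K"
proof
  show "K \<subseteq> prism K u a 0 \<inter> prism K u 0 b"
    using assms(2,3) by (simp add: subset_prism)
  show "prism K u a 0 \<inter> prism K u 0 b \<subseteq> K"
  proof
    fix z assume z: "z \<in> prism K u a 0 \<inter> prism K u 0 b"
    then obtain x s where x: "z = x + s *\<^sub>R u" "x \<in> K" "s \<le> 0"
      unfolding prism_def by auto
    obtain y r where y: "z = y + r *\<^sub>R u" "y \<in> K" "0 \<le> r"
      using z unfolding prism_def by auto
    have "s = r"
    proof (rule ccontr)
      assume "s \<noteq> r"
      then have "u = (1 / (s - r)) *\<^sub>R ((s - r) *\<^sub>R u)"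
        by simp
      also have "(s - r) *\<^sub>R u = y - x"
        using x(1) y(1) by (simp add: algebra_simps)
      also have "(1 / (s - r)) *\<^sub>R (y - x) \<in> span K"
        using x(2) y(2) by (intro span_mul span_diff span_base)
      finally show False using assms(1) by contradiction
    qed
    then show "z \<in> K" using x y by simp
  qed
qed

lemma aff_dim_less_prism:
  assumes "0 \<in> K" "u \<notin> span K" "a \<le> 0" "0 \<le> b" "a < b"
  shows "aff_dim K < aff_dim (prism K u a b)"
proof -
  define s where "s = (if b = 0 then a else b)"
  have s: "s \<in> {a..b}" "s \<noteq> 0"
    using assms(3-5) by (auto simp: s_def)
  have "s *\<^sub>R u \<notin> span K"
    using assms(2) s(2) span_mul[of "s *\<^sub>R u" K "1 / s"] by auto
  then have "aff_dim (insert (s *\<^sub>R u) K) = aff_dim K + 1"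
    using affine_hull_span_0[OF hull_inc[OF assms(1)]] by (simp add: aff_dim_insert)
  moreover have "insert (s *\<^sub>R u) K \<subseteq> prism K u a b"
    using assms(1) s prism_memI[of 0 K s a b u] subset_prism[OF assms(3,4), of K u] by auto
  then have "aff_dim (insert (s *\<^sub>R u) K) \<le> aff_dim (prism K u a b)"
    by (rule aff_dim_subset)
  ultimately show ?thesis
    by linarith
qed

lemma Ko_lower_dim_split:
  fixes K :: "(real^'n) set"
  assumes "K \<in> Ko" "aff_dim K < int CARD('n)"
  obtains L1 L2 where "L1 \<in> Ko" "L2 \<in> Ko" "L1 \<union> L2 \<in> Ko" "L1 \<inter> L2 = K"
    "aff_dim K < aff_dim L1" "aff_dim K < aff_dim L2" "aff_dim K < aff_dim (L1 \<union> L2)"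
proof -
  have "0 \<in> K" using assms(1) by (simp add: Ko_def)
  have "span K \<noteq> UNIV"
  proof
    assume "span K = UNIV"
    then have "affine hull K = UNIV"
      using affine_hull_span_0[OF hull_inc[OF \<open>0 \<in> K\<close>]] by simp
    then have "aff_dim K = aff_dim (UNIV :: (real^'n) set)"
      by (metis aff_dim_affine_hull)
    then have "aff_dim K = int CARD('n)"
      by simp
    with assms(2) show False by simp
  qed
  then obtain u where u: "u \<notin> span K" by blast
  show thesis
  proof (rule that[of "prism K u (-1) 0" "prism K u 0 1"])
    have U: "prism K u (-1) 0 \<union> prism K u 0 1 = prism K u (-1) 1"
      by (rule prism_Un) simp_all
    show "prism K u (-1) 0 \<in> Ko" "prism K u 0 1 \<in> Ko" "prism K u (-1) 0 \<union> prism K u 0 1 \<in> Ko"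
      unfolding U using assms(1) by (simp_all add: prism_in_Ko)
    show "prism K u (-1) 0 \<inter> prism K u 0 1 = K"
      using u by (simp add: prism_Int)
    show "aff_dim K < aff_dim (prism K u (-1) 0)" "aff_dim K < aff_dim (prism K u 0 1)"
      "aff_dim K < aff_dim (prism K u (-1) 0 \<union> prism K u 0 1)"
      unfolding U using \<open>0 \<in> K\<close> u by (simp_all add: aff_dim_less_prism)
  qed
qed

lemma Lp_valuation_intertwining_Int:
  fixes f g :: "real^'n \<Rightarrow> real^'n"
  assumes p: "0 < p" and V: "Lp_Minkowski_valuation p Y"
    and f: "linear f" "inj f" and g: "linear g"
    and KL: "K \<in> Ko" "L \<in> Ko" "K \<union> L \<in> Ko"
    and hyps: "Y (f ` K) = g ` Y K" "Y (f ` L) = g ` Y L" "Y (f ` (K \<union> L)) = g ` Y (K \<union> L)"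
  shows "Y (f ` (K \<inter> L)) = g ` Y (K \<inter> L)"
proof (rule Ko_eq_if_support_fun_eq)
  have Y_Ko: "\<And>M. M \<in> Ko \<Longrightarrow> Y M \<in> Ko" and val:
    "\<And>M N x. M \<in> Ko \<Longrightarrow> N \<in> Ko \<Longrightarrow> M \<union> N \<in> Ko \<Longrightarrow>
      support_fun (Y (M \<union> N)) x powr p + support_fun (Y (M \<inter> N)) x powr p
        = support_fun (Y M) x powr p + support_fun (Y N) x powr p"
    using V unfolding Lp_Minkowski_valuation_def by blast+
  have fKL: "f ` K \<union> f ` L = f ` (K \<union> L)" "f ` K \<inter> f ` L = f ` (K \<inter> L)"
    by (simp_all add: image_Un image_Int[OF f(2)])
  have KL_Ko: "K \<inter> L \<in> Ko"
    using KL(1,2) by (rule Ko_Int)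
  have fKo: "f ` K \<in> Ko" "f ` L \<in> Ko" "f ` (K \<union> L) \<in> Ko" "f ` (K \<inter> L) \<in> Ko"
    using Ko_linear_image[OF f(1)] KL KL_Ko by simp_all
  show Y_fKL: "Y (f ` (K \<inter> L)) \<in> Ko" and "g ` Y (K \<inter> L) \<in> Ko"
    using Y_Ko[OF fKo(4)] Ko_linear_image[OF g Y_Ko[OF KL_Ko]] by simp_all
  fix x
  \<comment> \<open>In the two valuation identities, three of the four terms agree by hypothesis.\<close>
  have "support_fun (Y (f ` (K \<inter> L))) x powr p = support_fun (Y (K \<inter> L)) (adjoint g x) powr p"
    using val[OF fKo(1,2) fKo(3)[folded fKL(1)], of x] val[OF KL, of "adjoint g x"]
    unfolding fKL hyps support_fun_linear_image[OF g] by linarith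
  then show "support_fun (Y (f ` (K \<inter> L))) x = support_fun (g ` Y (K \<inter> L)) x"
    unfolding support_fun_linear_image[OF g]
    by (rule powr_eq_cancel[OF support_fun_nonneg[OF Y_fKL] support_fun_nonneg[OF Y_Ko[OF KL_Ko]] p])
qed

lemma Lp_valuation_intertwining_extends:
  fixes f g :: "real^'n \<Rightarrow> real^'n"
  assumes p: "0 < p" and V: "Lp_Minkowski_valuation p Y"
    and f: "linear f" "inj f" and g: "linear g"
    and full: "\<And>K. K \<in> Ko \<Longrightarrow> aff_dim K = int CARD('n) \<Longrightarrow> Y (f ` K) = g ` Y K"
    and "K \<in> Ko"
  shows "Y (f ` K) = g ` Y K"
  using \<open>K \<in> Ko\<close>
proof (induction "nat (int CARD('n) - aff_dim K)" arbitrary: K rule: less_induct)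
  case less
  have dim_le: "aff_dim M \<le> int CARD('n)" for M :: "(real^'n) set"
    using aff_dim_le_DIM[of M] by simp
  show ?case
  proof (cases "aff_dim K = int CARD('n)")
    case True
    then show ?thesis using full less.prems by blast
  next
    case False
    then have "aff_dim K < int CARD('n)"
      using dim_le[of K] by simp
    then obtain L1 L2 where L: "L1 \<in> Ko" "L2 \<in> Ko" "L1 \<union> L2 \<in> Ko" "L1 \<inter> L2 = K"
      and dims: "aff_dim K < aff_dim L1" "aff_dim K < aff_dim L2" "aff_dim K < aff_dim (L1 \<union> L2)"
      by (rule Ko_lower_dim_split[OF less.prems])
    have IH: "Y (f ` M) = g ` Y M" if "M \<in> Ko" "aff_dim K < aff_dim M" for M
      using less.hyps[OF _ that(1)] that(2) dim_le[of M] by linarith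
    show ?thesis
      using Lp_valuation_intertwining_Int[OF p V f g L(1-3) IH IH IH] L dims by simp
  qed
qed

lemma Lp_valuation_SL_homogeneous_extends:
  fixes Y :: "(real^'n) set \<Rightarrow> (real^'n) set" and G :: "real^'n^'n \<Rightarrow> real^'n^'n"
  assumes p: "0 < p" and V: "Lp_Minkowski_valuation p Y"
    and full: "\<forall>K\<in>Ko. aff_dim K = int CARD('n) \<longrightarrow>
        (\<forall>A\<in>SL. Y (lin_image A K) = lin_image (G A) (Y K)) \<and>
        (\<forall>t>0. Y ((\<lambda>x. t *\<^sub>R x) ` K) = (\<lambda>x. (t powr q) *\<^sub>R x) ` Y K)"
  shows "\<forall>K\<in>Ko. (\<forall>A\<in>SL. Y (lin_image A K) = lin_image (G A) (Y K)) \<and>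
        (\<forall>t>0. Y ((\<lambda>x. t *\<^sub>R x) ` K) = (\<lambda>x. (t powr q) *\<^sub>R x) ` Y K)"
proof (intro ballI conjI allI impI)
  fix K :: "(real^'n) set" and A :: "real^'n^'n"
  assume "K \<in> Ko" "A \<in> SL"
  then have "inj ((*v) A)"
    by (intro inj_matrix_vector_mult) (simp add: SL_def invertible_det_nz)
  then show "Y (lin_image A K) = lin_image (G A) (Y K)"
    unfolding lin_image_def
    using Lp_valuation_intertwining_extends[OF p V _ _ _ _ \<open>K \<in> Ko\<close>] full \<open>A \<in> SL\<close>
    by (simp add: lin_image_def)
next
  fix K :: "(real^'n) set" and t :: real
  assume "K \<in> Ko" "0 < t"
  then have "inj (\<lambda>x::real^'n. t *\<^sub>R x)"
    by (simp add: inj_on_def)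
  then show "Y ((\<lambda>x. t *\<^sub>R x) ` K) = (\<lambda>x. (t powr q) *\<^sub>R x) ` Y K"
    using Lp_valuation_intertwining_extends[OF p V _ _ _ _ \<open>K \<in> Ko\<close>] full \<open>0 < t\<close>
    by (simp add: linear_scaleR)
qed

theorem lemma4p2:
  fixes Y :: "(real^'n) set \<Rightarrow> (real^'n) set" and p q :: real
  assumes "p \<ge> 1"
    and "Lp_Minkowski_valuation p Y"
  shows
   "((\<forall>K\<in>Ko. aff_dim K = int CARD('n) \<longrightarrow>
        (\<forall>A\<in>SL. Y (lin_image A K) = lin_image A (Y K)) \<and>
        (\<forall>t>0. Y ((\<lambda>x. t *\<^sub>R x) ` K) = (\<lambda>x. (t powr q) *\<^sub>R x) ` Y K))
     \<longrightarrow>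
     (\<forall>K\<in>Ko.
        (\<forall>A\<in>SL. Y (lin_image A K) = lin_image A (Y K)) \<and>
        (\<forall>t>0. Y ((\<lambda>x. t *\<^sub>R x) ` K) = (\<lambda>x. (t powr q) *\<^sub>R x) ` Y K)))
    \<and>
    ((\<forall>K\<in>Ko. aff_dim K = int CARD('n) \<longrightarrow>
        (\<forall>A\<in>SL. Y (lin_image A K) = lin_image (inv_transpose A) (Y K)) \<and>
        (\<forall>t>0. Y ((\<lambda>x. t *\<^sub>R x) ` K) = (\<lambda>x. (t powr q) *\<^sub>R x) ` Y K))
     \<longrightarrow>
     (\<forall>K\<in>Ko.
        (\<forall>A\<in>SL. Y (lin_image A K) = lin_image (inv_transpose A) (Y K)) \<and>
        (\<forall>t>0. Y ((\<lambda>x. t *\<^sub>R x) ` K) = (\<lambda>x. (t powr q) *\<^sub>R x) ` Y K)))"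
proof -
  have "0 < p" using assms(1) by simp
  show ?thesis
    using Lp_valuation_SL_homogeneous_extends[OF \<open>0 < p\<close> assms(2), where G = "\<lambda>A. A"]
      Lp_valuation_SL_homogeneous_extends[OF \<open>0 < p\<close> assms(2), where G = inv_transpose]
    by blast
qed

end
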